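(* Let $A$ be a noetherian commutative $\mathbb N$-graded ring, $\mathfrak m=A_+$, and $I=(a_1,\dots,a_n)$ an ideal of $A$ with $\mathrm{depth}_{\mathfrak m}(A)>\mathrm{depth}_I(A)$. Then $H^0_{\mathfrak m}\big(H_{n-\mathrm{depth}_I(A)}(\mathbf a;A)\big)=0$, where $H_\bullet(\mathbf a;A)$ is the Koszul homology of $a_1,\dots,a_n$ over $A$.
   Context: $H^0_{\mathfrak m}(N)=\{x\in N:\exists m,\ \mathfrak m^mx=0\}$. $\mathrm{depth}_{\mathfrak a}(A)$ is the grade of the ideal $\mathfrak a$ on $A$. *)

theory Defs
  imports Main "HOL-Library.Extended_Nat"
begin

definition is_ideal :: "'a::comm_ring_1 set \<Rightarrow> bool" where
  "is_ideal I \<longleftrightarrow> 0 \<in> I \<and> (\<forall>x\<in>I. \<forall>y\<in>I. x + y \<in> I) \<and> (\<forall>r. \<forall>x\<in>I. r * x \<in> I)"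

definition ideal_gen :: "'a::comm_ring_1 set \<Rightarrow> 'a set" where
  "ideal_gen S = {\<Sum>s\<in>F. r s * s | F r. finite F \<and> F \<subseteq> S}"

definition ideal_pow :: "'a::comm_ring_1 set \<Rightarrow> nat \<Rightarrow> 'a set" where
  "ideal_pow I k = ideal_gen {prod_list xs | xs. length xs = k \<and> set xs \<subseteq> I}"

definition noetherian_ring :: "'a::comm_ring_1 itself \<Rightarrow> bool" where
  "noetherian_ring (_ :: 'a itself) \<longleftrightarrow>
     (\<forall>I :: 'a set. is_ideal I \<longrightarrow> (\<exists>F. finite F \<and> F \<subseteq> I \<and> I = ideal_gen F))"

definition graded_ring :: "(nat \<Rightarrow> 'a::comm_ring_1 set) \<Rightarrow> bool" where
  "graded_ring G \<longleftrightarrow>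
     (\<forall>i. 0 \<in> G i \<and> (\<forall>x\<in>G i. \<forall>y\<in>G i. x + y \<in> G i \<and> - x \<in> G i)) \<and>
     (\<forall>i j. \<forall>x\<in>G i. \<forall>y\<in>G j. x * y \<in> G (i + j)) \<and>
     (\<forall>x. \<exists>!c. (\<forall>i. c i \<in> G i) \<and> finite {i. c i \<noteq> 0} \<and> x = (\<Sum>i\<in>{i. c i \<noteq> 0}. c i))"

definition irrelevant_ideal :: "(nat \<Rightarrow> 'a::comm_ring_1 set) \<Rightarrow> 'a set" where
  "irrelevant_ideal G = {\<Sum>i\<in>F. c i | F c. finite F \<and> 0 \<notin> F \<and> (\<forall>i\<in>F. c i \<in> G i)}"

definition weak_regular_seq :: "'a::comm_ring_1 list \<Rightarrow> bool" where
  "weak_regular_seq xs \<longleftrightarrow>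
     (\<forall>i<length xs. \<forall>y. xs ! i * y \<in> ideal_gen (set (take i xs)) \<longrightarrow> y \<in> ideal_gen (set (take i xs)))"

text \<open>depth_J(A) = grade of J on A: supremum of lengths of A-regular sequences in J
  (this is \<infinity> exactly when J = A, matching the Ext-definition).\<close>
definition grade :: "'a::comm_ring_1 set \<Rightarrow> enat" where
  "grade J = Sup {enat (length xs) | xs. set xs \<subseteq> J \<and> weak_regular_seq xs}"

text \<open>K_p is free on e_T, T \<subseteq> {0..<n}, |T| = p; chains are coefficient functions.\<close>
definition koszul_chain :: "nat \<Rightarrow> nat \<Rightarrow> (nat set \<Rightarrow> 'a::comm_ring_1) \<Rightarrow> bool" where
  "koszul_chain n p c \<longleftrightarrow> (\<forall>T. c T \<noteq> 0 \<longrightarrow> T \<subseteq> {..<n} \<and> card T = p)"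

text \<open>d(e_S) = sum_{j in S} (-1)^{#{i in S. i<j}} a_j e_{S-{j}}, written on coefficients.\<close>
definition koszul_d :: "(nat \<Rightarrow> 'a::comm_ring_1) \<Rightarrow> nat \<Rightarrow> (nat set \<Rightarrow> 'a) \<Rightarrow> nat set \<Rightarrow> 'a" where
  "koszul_d a n c T = (\<Sum>j\<in>{..<n} - T. (-1) ^ card {i\<in>T. i < j} * a j * c (insert j T))"

definition koszul_cycles :: "(nat \<Rightarrow> 'a::comm_ring_1) \<Rightarrow> nat \<Rightarrow> nat \<Rightarrow> (nat set \<Rightarrow> 'a) set" where
  "koszul_cycles a n p = {c. koszul_chain n p c \<and> koszul_d a n c = (\<lambda>_. 0)}"

definition koszul_boundaries :: "(nat \<Rightarrow> 'a::comm_ring_1) \<Rightarrow> nat \<Rightarrow> nat \<Rightarrow> (nat set \<Rightarrow> 'a) set" where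
  "koszul_boundaries a n p = {koszul_d a n c | c. koszul_chain n (Suc p) c}"

text \<open>H^0_m(H_p(a;A)) = 0, with H_p = Z_p / B_p: a class killed by some power of m is zero.\<close>
definition koszul_H0_vanishes :: "'a::comm_ring_1 set \<Rightarrow> (nat \<Rightarrow> 'a) \<Rightarrow> nat \<Rightarrow> nat \<Rightarrow> bool" where
  "koszul_H0_vanishes m a n p \<longleftrightarrow>
     (\<forall>z\<in>koszul_cycles a n p.
        (\<exists>k. \<forall>y\<in>ideal_pow m k. (\<lambda>T. y * z T) \<in> koszul_boundaries a n p)
        \<longrightarrow> z \<in> koszul_boundaries a n p)"

end

theory Submission
  imports Defs
begin

(* Let g = depth_I(A), let x_1, ..., x_g be an A-regular sequence in I and, since depth_m(A) > g,
   let y_1, ..., y_s with s > g be an A-regular sequence in m.  Put Q_i = (x_1, ..., x_i).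
   The exact sequences 0 -> A/Q_i -x_{i+1}-> A/Q_i -> A/Q_{i+1} -> 0 carry the vanishing of
   H_q(y; A) for q > 0 over to the vanishing of H_q(y; A/Q_i) for q > i; for i = g and q = s
   this says (Q_g : (y)) = Q_g, so A/Q_g, and with it H_n(a; A/Q_g), has no m-torsion.
   Descending induction on i then shows that H_{n-g+i}(a; A/Q_i) has no m-torsion: if z is an
   m-torsion cycle, then x_{i+1} z = d u because I kills Koszul homology; u is an m-torsion
   cycle modulo Q_{i+1}, as H_{n-g+i+1}(a; A/Q_i) = 0 by depth sensitivity, hence a boundary
   by induction; as x_{i+1} is a nonzerodivisor on A/Q_i, z is a boundary. *)

interpretation ideal: module "(*) :: 'a::comm_ring_1 \<Rightarrow> 'a \<Rightarrow> 'a"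
  by unfold_locales (simp_all add: algebra_simps)

declare ideal.scale_scale [simp del] \<comment> \<open>mult.assoc reversed: simp would loop with mult_ac\<close>

lemma ideal_gen_eq_span: "ideal_gen = ideal.span"
  by (simp add: fun_eq_iff ideal_gen_def ideal.span_explicit)

lemma subspace_mult_vimage:
  fixes u :: "'a::comm_ring_1"
  assumes "ideal.subspace J"
  shows "ideal.subspace {y. u * y \<in> J}"
  using assms unfolding ideal.subspace_def
  by (metis distrib_left mem_Collect_eq mult.left_commute mult_zero_right)

lemma ideal_pow_mult:
  assumes "u \<in> m" and "y \<in> ideal_pow m k"
  shows "u * y \<in> ideal_pow m (Suc k)"
  using assms(2) unfolding ideal_pow_def ideal_gen_eq_span
proof (induction rule: ideal.span_induct)
  case base
  show ?case
    by (rule subspace_mult_vimage) simp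
next
  case (step p)
  then obtain xs where "p = prod_list xs" "length xs = k" "set xs \<subseteq> m"
    by blast
  with assms(1) show ?case
    by (intro ideal.span_base CollectI exI[of _ "u # xs"]) auto
qed

lemma one_mem_ideal_pow_0: "1 \<in> ideal_pow m 0"
  unfolding ideal_pow_def ideal_gen_eq_span
  by (intro ideal.span_base CollectI exI[of _ "[]"]) auto

lemma colon_ideal_pow_trivial:
  assumes colon: "\<And>w. (\<forall>u\<in>m. u * w \<in> Q) \<Longrightarrow> w \<in> Q"
    and "\<forall>y\<in>ideal_pow m k. y * w \<in> Q"
  shows "w \<in> Q"
  using assms(2)
proof (induction k arbitrary: w)
  case 0
  then show ?case
    using one_mem_ideal_pow_0[of m] by force
next
  case (Suc k)
  have "y * w \<in> Q" if "y \<in> ideal_pow m k" for y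
    using colon Suc.prems ideal_pow_mult[OF _ that] by (metis mult.assoc)
  then show ?case
    by (intro Suc.IH) blast
qed

definition koszul_sign :: "nat \<Rightarrow> nat set \<Rightarrow> 'a::comm_ring_1" where
  "koszul_sign j T = (-1) ^ card {i\<in>T. i < j}"

lemma koszul_d_eq:
  "koszul_d a N f T = (\<Sum>j\<in>{..<N} - T. koszul_sign j T * a j * f (insert j T))"
  by (simp add: koszul_d_def koszul_sign_def)

lemma koszul_sign_insert:
  assumes "j \<notin> T"
  shows "koszul_sign k (insert j T) = (if j < k then - koszul_sign k T else koszul_sign k T)"
proof (cases "j < k")
  case True
  have "finite {i\<in>T. i < k}"
    by (rule finite_subset[of _ "{..<k}"]) auto
  moreover have "{i\<in>insert j T. i < k} = insert j {i\<in>T. i < k}"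
    using True by auto
  ultimately show ?thesis
    using True assms by (simp add: koszul_sign_def)
next
  case False
  then have "{i\<in>insert j T. i < k} = {i\<in>T. i < k}"
    by auto
  then show ?thesis
    using False by (simp add: koszul_sign_def)
qed

lemma koszul_sign_square: "koszul_sign j T * koszul_sign j T = 1"
  by (simp add: koszul_sign_def flip: power_add)

lemma koszul_d_d [simp]: "koszul_d a N (koszul_d a N f) T = 0"
proof -
  define A where "A = {..<N} - T"
  define g where "g j k = koszul_sign j T * koszul_sign k (insert j T) * a j * a k
      * f (insert k (insert j T))" for j k
  define L where "L = {(j, k). j \<in> A \<and> k \<in> A \<and> j < k}"
  have "finite A"
    by (simp add: A_def)
  then have fin: "finite L"
    unfolding L_def by (auto intro: finite_subset[of _ "A \<times> A"])
  \<comment> \<open>the terms for (j, k) and (k, j) cancel, the two signs differing by one transposition\<close>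
  have swap: "g k j = - g j k" if "(j, k) \<in> L" for j k
    using that by (simp add: L_def A_def g_def koszul_sign_insert insert_commute mult_ac)
  have "koszul_d a N (koszul_d a N f) T = (\<Sum>j\<in>A. \<Sum>k\<in>A - {j}. g j k)"
    unfolding koszul_d_eq A_def g_def
    by (rule sum.cong) (auto simp: sum_distrib_left mult_ac Diff_insert2[symmetric] intro!: sum.cong)
  also have "\<dots> = (\<Sum>(j, k)\<in>Sigma A (\<lambda>j. A - {j}). g j k)"
    by (rule sum.Sigma) (use \<open>finite A\<close> in auto)
  also have "Sigma A (\<lambda>j. A - {j}) = L \<union> prod.swap ` L"
    by (auto simp: L_def)
  also have "(\<Sum>(j, k)\<in>L \<union> prod.swap ` L. g j k) = (\<Sum>(j, k)\<in>L. g j k) + (\<Sum>(j, k)\<in>prod.swap ` L. g j k)"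
    using fin by (intro sum.union_disjoint) (auto simp: L_def)
  also have "(\<Sum>(j, k)\<in>prod.swap ` L. g j k) = (\<Sum>(j, k)\<in>L. - g j k)"
    using swap by (subst sum.reindex) (auto simp: case_prod_unfold intro!: sum.cong)
  finally show ?thesis
    by (simp add: case_prod_unfold sum_negf)
qed

\<comment> \<open>left multiplication by e_j in the exterior algebra\<close>
definition koszul_homotopy :: "nat \<Rightarrow> (nat set \<Rightarrow> 'a::comm_ring_1) \<Rightarrow> nat set \<Rightarrow> 'a" where
  "koszul_homotopy j f T = (if j \<in> T then koszul_sign j (T - {j}) * f (T - {j}) else 0)"

lemma koszul_homotopy_formula_not_mem:
  assumes "j < N" and "j \<notin> T"
  shows "koszul_d a N (koszul_homotopy j f) T = a j * f T"
proof -
  have "koszul_d a N (koszul_homotopy j f) T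
      = (\<Sum>k\<in>{..<N} - T. if k = j then koszul_sign j T * a j * (koszul_sign j T * f T) else 0)"
    unfolding koszul_d_eq using assms(2) by (intro sum.cong) (auto simp: koszul_homotopy_def)
  also have "\<dots> = (koszul_sign j T * koszul_sign j T) * a j * f T"
    using assms by (simp add: mult_ac)
  finally show ?thesis
    by (simp add: koszul_sign_square)
qed

lemma koszul_homotopy_formula_mem:
  assumes "j < N" and "j \<in> T"
  shows "koszul_d a N (koszul_homotopy j f) T + koszul_homotopy j (koszul_d a N f) T = a j * f T"
proof -
  define T' where "T' = T - {j}"
  define B where "B = {..<N} - T"
  define c where "c k = koszul_sign j T' * koszul_sign k T' * a k * f (insert k T')" for k
  have T: "T = insert j T'" "j \<notin> T'"
    using assms(2) by (auto simp: T'_def)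
  have B: "{..<N} - T' = insert j B" "j \<notin> B" "finite B"
    using assms(1) T by (auto simp: B_def)
  have "koszul_homotopy j (koszul_d a N f) T = koszul_sign j T' * koszul_d a N f T'"
    using assms(2) by (simp add: koszul_homotopy_def T'_def)
  also have "\<dots> = c j + (\<Sum>k\<in>B. c k)"
    unfolding koszul_d_eq B(1) using B
    by (simp add: c_def distrib_left sum_distrib_left mult.assoc)
  also have "c j = a j * f T"
    using T by (simp add: c_def mult.assoc[symmetric] koszul_sign_square mult.commute)
  finally have h: "koszul_homotopy j (koszul_d a N f) T = a j * f T + (\<Sum>k\<in>B. c k)" .
  \<comment> \<open>moving e_j past e_k changes the sign exactly when k < j\<close>
  have "koszul_d a N (koszul_homotopy j f) T = (\<Sum>k\<in>B. - c k)"
    unfolding koszul_d_eq B_def[symmetric]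
  proof (rule sum.cong)
    fix k
    assume k: "k \<in> B"
    then have "k \<notin> T'" "k \<noteq> j" "insert k T - {j} = insert k T'"
      using T by (auto simp: B_def)
    then show "koszul_sign k T * a k * koszul_homotopy j f (insert k T) = - c k"
      using T by (auto simp: koszul_homotopy_def c_def koszul_sign_insert mult_ac)
  qed simp
  then show ?thesis
    using h by (simp add: sum_negf)
qed

lemma koszul_homotopy_formula:
  assumes "j < N"
  shows "koszul_d a N (koszul_homotopy j f) T + koszul_homotopy j (koszul_d a N f) T = a j * f T"
  using assms koszul_homotopy_formula_mem koszul_homotopy_formula_not_mem
  by (cases "j \<in> T") (auto simp: koszul_homotopy_def)

lemma koszul_d_add: "koszul_d a N (\<lambda>T. f T + g T) T = koszul_d a N f T + koszul_d a N g T"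
  by (simp add: koszul_d_def sum.distrib[symmetric] algebra_simps)

lemma koszul_d_diff: "koszul_d a N (\<lambda>T. f T - g T) T = koszul_d a N f T - koszul_d a N g T"
  by (simp add: koszul_d_def sum_subtractf[symmetric] algebra_simps)

lemma koszul_d_scale: "koszul_d a N (\<lambda>T. c * f T) T = c * koszul_d a N f T"
  by (simp add: koszul_d_def sum_distrib_left mult_ac)

lemma koszul_d_zero: "koszul_d a N (\<lambda>T. 0) T = 0"
  by (simp add: koszul_d_def)

lemma koszul_d_mem_ideal: "ideal.subspace Q \<Longrightarrow> (\<And>T. f T \<in> Q) \<Longrightarrow> koszul_d a N f T \<in> Q"
  unfolding koszul_d_def by (intro ideal.subspace_sum) (auto intro: ideal.subspace_scale)

lemma koszul_chain_add:
  "koszul_chain N p f \<Longrightarrow> koszul_chain N p g \<Longrightarrow> koszul_chain N p (\<lambda>T. f T + g T)"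
  unfolding koszul_chain_def by (metis add.right_neutral)

lemma koszul_chain_diff:
  "koszul_chain N p f \<Longrightarrow> koszul_chain N p g \<Longrightarrow> koszul_chain N p (\<lambda>T. f T - g T)"
  unfolding koszul_chain_def by (metis diff_self)

lemma koszul_chain_scale: "koszul_chain N p f \<Longrightarrow> koszul_chain N p (\<lambda>T. c * f T)"
  unfolding koszul_chain_def by (metis mult_zero_right)

lemma koszul_chain_zero: "koszul_chain N p (\<lambda>T. 0)"
  unfolding koszul_chain_def by simp

lemma koszul_chain_degree_gt: "koszul_chain N p f \<Longrightarrow> N < p \<Longrightarrow> f = (\<lambda>T. 0)"
  unfolding koszul_chain_def by (metis card_lessThan card_mono finite_lessThan leD)

lemma koszul_chain_d: "koszul_chain N (Suc p) f \<Longrightarrow> koszul_chain N p (koszul_d a N f)"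
  unfolding koszul_chain_def
proof (intro allI impI)
  fix T
  assume f: "\<forall>T. f T \<noteq> 0 \<longrightarrow> T \<subseteq> {..<N} \<and> card T = Suc p" and "koszul_d a N f T \<noteq> 0"
  then obtain j where "j \<in> {..<N} - T" "f (insert j T) \<noteq> 0"
    unfolding koszul_d_def by (metis (no_types, lifting) mult_zero_right sum.neutral)
  with f have "j \<notin> T" "insert j T \<subseteq> {..<N}" "card (insert j T) = Suc p"
    by blast+
  then show "T \<subseteq> {..<N} \<and> card T = p"
    by (metis card_insert_disjoint finite_lessThan finite_subset insert_subset nat.inject)
qed

lemma koszul_chain_homotopy:
  assumes "j < N" and "koszul_chain N p f"
  shows "koszul_chain N (Suc p) (koszul_homotopy j f)"
  unfolding koszul_chain_def
proof (intro allI impI)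
  fix T
  assume "koszul_homotopy j f T \<noteq> 0"
  then have "j \<in> T" and "f (T - {j}) \<noteq> 0"
    by (auto simp: koszul_homotopy_def split: if_splits)
  with assms have "T \<subseteq> {..<N}" "card (T - {j}) = p"
    unfolding koszul_chain_def by blast+
  with \<open>j \<in> T\<close> show "T \<subseteq> {..<N} \<and> card T = Suc p"
    by (metis card_Suc_Diff1 finite_lessThan finite_subset)
qed

text \<open>The Koszul complex K(a; A/Q) for an ideal Q, with chains represented by their lifts to A.\<close>

definition koszul_cycle_mod :: "(nat \<Rightarrow> 'a::comm_ring_1) \<Rightarrow> nat \<Rightarrow> 'a set \<Rightarrow> nat \<Rightarrow> (nat set \<Rightarrow> 'a) \<Rightarrow> bool" where
  "koszul_cycle_mod a N Q p z \<longleftrightarrow> koszul_chain N p z \<and> (\<forall>T. koszul_d a N z T \<in> Q)"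

definition koszul_boundary_mod :: "(nat \<Rightarrow> 'a::comm_ring_1) \<Rightarrow> nat \<Rightarrow> 'a set \<Rightarrow> nat \<Rightarrow> (nat set \<Rightarrow> 'a) \<Rightarrow> bool" where
  "koszul_boundary_mod a N Q p z \<longleftrightarrow>
     (\<exists>\<beta>. koszul_chain N (Suc p) \<beta> \<and> (\<forall>T. z T - koszul_d a N \<beta> T \<in> Q))"

definition koszul_acyclic_mod :: "(nat \<Rightarrow> 'a::comm_ring_1) \<Rightarrow> nat \<Rightarrow> 'a set \<Rightarrow> nat \<Rightarrow> bool" where
  "koszul_acyclic_mod a N Q p \<longleftrightarrow> (\<forall>z. koszul_cycle_mod a N Q p z \<longrightarrow> koszul_boundary_mod a N Q p z)"

definition koszul_torsion_free_mod :: "'a::comm_ring_1 set \<Rightarrow> (nat \<Rightarrow> 'a) \<Rightarrow> nat \<Rightarrow> 'a set \<Rightarrow> nat \<Rightarrow> bool" where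
  "koszul_torsion_free_mod m a N Q p \<longleftrightarrow>
     (\<forall>z. koszul_cycle_mod a N Q p z \<longrightarrow>
        (\<exists>k. \<forall>y\<in>ideal_pow m k. koszul_boundary_mod a N Q p (\<lambda>T. y * z T)) \<longrightarrow>
        koszul_boundary_mod a N Q p z)"

lemma koszul_cycle_mod_zero_iff: "koszul_cycle_mod a N {0} p z \<longleftrightarrow> z \<in> koszul_cycles a N p"
  by (auto simp: koszul_cycle_mod_def koszul_cycles_def fun_eq_iff)

lemma koszul_boundary_mod_zero_iff:
  "koszul_boundary_mod a N {0} p z \<longleftrightarrow> z \<in> koszul_boundaries a N p"
  by (auto simp: koszul_boundary_mod_def koszul_boundaries_def fun_eq_iff)

lemma koszul_H0_vanishes_iff_torsion_free:
  "koszul_H0_vanishes m a N p \<longleftrightarrow> koszul_torsion_free_mod m a N {0} p"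
  by (auto simp: koszul_H0_vanishes_def koszul_torsion_free_mod_def koszul_cycle_mod_zero_iff
      koszul_boundary_mod_zero_iff)

lemma koszul_boundary_mod_of_mem: "(\<And>T. z T \<in> Q) \<Longrightarrow> koszul_boundary_mod a N Q p z"
  unfolding koszul_boundary_mod_def
  by (intro exI[of _ "\<lambda>T. 0"]) (simp add: koszul_chain_zero koszul_d_zero)

lemma koszul_boundary_mod_top_iff: "koszul_boundary_mod a N Q N z \<longleftrightarrow> (\<forall>T. z T \<in> Q)"
proof
  assume "koszul_boundary_mod a N Q N z"
  then obtain \<beta> where "koszul_chain N (Suc N) \<beta>" "\<And>T. z T - koszul_d a N \<beta> T \<in> Q"
    unfolding koszul_boundary_mod_def by blast
  then show "\<forall>T. z T \<in> Q"
    using koszul_chain_degree_gt by (fastforce simp: koszul_d_zero)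
qed (simp add: koszul_boundary_mod_of_mem)

lemma koszul_boundary_mod_add:
  assumes Q: "ideal.subspace Q"
    and "koszul_boundary_mod a N Q p z" and "koszul_boundary_mod a N Q p z'"
  shows "koszul_boundary_mod a N Q p (\<lambda>T. z T + z' T)"
proof -
  obtain \<beta> \<beta>' where \<beta>: "koszul_chain N (Suc p) \<beta>" "\<And>T. z T - koszul_d a N \<beta> T \<in> Q"
    and \<beta>': "koszul_chain N (Suc p) \<beta>'" "\<And>T. z' T - koszul_d a N \<beta>' T \<in> Q"
    using assms(2,3) unfolding koszul_boundary_mod_def by blast
  have "z T + z' T - koszul_d a N (\<lambda>T. \<beta> T + \<beta>' T) T
      = (z T - koszul_d a N \<beta> T) + (z' T - koszul_d a N \<beta>' T)" for T
    by (simp add: koszul_d_add)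
  then have "z T + z' T - koszul_d a N (\<lambda>T. \<beta> T + \<beta>' T) T \<in> Q" for T
    using ideal.subspace_add[OF Q \<beta>(2) \<beta>'(2)] by metis
  with \<beta>(1) \<beta>'(1) show ?thesis
    unfolding koszul_boundary_mod_def by (blast intro: koszul_chain_add)
qed

lemma koszul_boundary_mod_scale:
  assumes Q: "ideal.subspace Q" and "koszul_boundary_mod a N Q p z"
  shows "koszul_boundary_mod a N Q p (\<lambda>T. c * z T)"
proof -
  obtain \<beta> where "koszul_chain N (Suc p) \<beta>" "\<And>T. z T - koszul_d a N \<beta> T \<in> Q"
    using assms(2) unfolding koszul_boundary_mod_def by blast
  moreover have "c * z T - koszul_d a N (\<lambda>T. c * \<beta> T) T = c * (z T - koszul_d a N \<beta> T)" for T
    by (simp add: koszul_d_scale right_diff_distrib)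
  ultimately show ?thesis
    unfolding koszul_boundary_mod_def
    by (intro exI[of _ "\<lambda>T. c * \<beta> T"]) (simp add: koszul_chain_scale ideal.subspace_scale[OF Q])
qed

lemma koszul_boundary_mod_ideal_mult:
  assumes Q: "ideal.subspace Q" and z: "koszul_cycle_mod a N Q p z"
    and x: "x \<in> ideal.span (a ` {..<N})"
  shows "koszul_boundary_mod a N Q p (\<lambda>T. x * z T)"
  using x
proof (induction rule: ideal.span_induct)
  case base
  have "koszul_boundary_mod a N Q p (\<lambda>T. (x + y) * z T)"
    if "koszul_boundary_mod a N Q p (\<lambda>T. x * z T)" "koszul_boundary_mod a N Q p (\<lambda>T. y * z T)"
    for x y
    using koszul_boundary_mod_add[OF Q that] by (simp add: distrib_right)
  moreover have "koszul_boundary_mod a N Q p (\<lambda>T. (c * x) * z T)"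
    if "koszul_boundary_mod a N Q p (\<lambda>T. x * z T)" for c x
    using koszul_boundary_mod_scale[OF Q that] by (simp add: mult.assoc)
  ultimately show ?case
    by (intro ideal.subspaceI) (auto simp: koszul_boundary_mod_of_mem ideal.subspace_0[OF Q])
next
  case (step y)
  then obtain j where j: "j < N" "y = a j"
    by auto
  have "y * z T - koszul_d a N (koszul_homotopy j z) T = koszul_homotopy j (koszul_d a N z) T" for T
    using koszul_homotopy_formula[OF j(1), of a z T] j(2) by (simp add: algebra_simps)
  moreover have "koszul_homotopy j (koszul_d a N z) T \<in> Q" for T
    using z Q unfolding koszul_cycle_mod_def koszul_homotopy_def
    by (auto intro: ideal.subspace_scale ideal.subspace_0)
  ultimately show ?case
    using z j unfolding koszul_boundary_mod_def koszul_cycle_mod_def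
    by (auto intro!: exI[of _ "koszul_homotopy j z"] koszul_chain_homotopy)
qed

fun regular_seq_mod :: "'a::comm_ring_1 set \<Rightarrow> 'a list \<Rightarrow> bool" where
  "regular_seq_mod S [] \<longleftrightarrow> True"
| "regular_seq_mod S (x # xs) \<longleftrightarrow>
     (\<forall>y. x * y \<in> ideal.span S \<longrightarrow> y \<in> ideal.span S) \<and> regular_seq_mod (insert x S) xs"

lemma regular_seq_mod_iff:
  "regular_seq_mod S xs \<longleftrightarrow>
     (\<forall>i<length xs. \<forall>y. xs ! i * y \<in> ideal.span (S \<union> set (take i xs))
        \<longrightarrow> y \<in> ideal.span (S \<union> set (take i xs)))"
proof (induction xs arbitrary: S)
  case (Cons x xs)
  show ?case
    unfolding regular_seq_mod.simps Cons.IH by (auto simp: less_Suc_eq_0_disj)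
qed simp

lemma weak_regular_seq_iff: "weak_regular_seq xs \<longleftrightarrow> regular_seq_mod {} xs"
  by (simp add: regular_seq_mod_iff weak_regular_seq_def ideal_gen_eq_span)

lemma regular_seq_mod_take: "regular_seq_mod S xs \<Longrightarrow> regular_seq_mod S (take k xs)"
  by (induction xs arbitrary: S k) (auto simp: take_Cons split: nat.split)

lemma koszul_chain_decompose_insert:
  assumes "koszul_chain N p f" and "\<And>T. f T \<in> ideal.span (insert x S)"
  obtains w where "koszul_chain N p w" and "\<And>T. f T - x * w T \<in> ideal.span S"
proof
  define w where "w T = (if f T = 0 then 0 else SOME r. f T - x * r \<in> ideal.span S)" for T
  show "koszul_chain N p w"
    using assms(1) by (simp add: koszul_chain_def w_def)
  show "f T - x * w T \<in> ideal.span S" for T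
  proof (cases "f T = 0")
    case False
    have "\<exists>r. f T - x * r \<in> ideal.span S"
      using assms(2)[of T] by (simp add: ideal.span_breakdown_eq mult.commute)
    then have "f T - x * (SOME r. f T - x * r \<in> ideal.span S) \<in> ideal.span S"
      by (rule someI_ex)
    with False show ?thesis
      by (simp add: w_def)
  qed (simp add: w_def ideal.span_zero)
qed

lemma koszul_cycle_mod_insert:
  assumes "koszul_chain N (Suc p) u" and "\<And>T. x * z T - koszul_d a N u T \<in> ideal.span S"
  shows "koszul_cycle_mod a N (ideal.span (insert x S)) (Suc p) u"
proof -
  have "koszul_d a N u T \<in> ideal.span (insert x S)" for T
  proof -
    have "x * z T \<in> ideal.span (insert x S)"
      by (subst mult.commute) (intro ideal.span_scale ideal.span_base insertI1)
    moreover have "x * z T - koszul_d a N u T \<in> ideal.span (insert x S)"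
      using assms(2) ideal.span_mono[OF subset_insertI] by blast
    ultimately have "x * z T - (x * z T - koszul_d a N u T) \<in> ideal.span (insert x S)"
      by (rule ideal.span_diff)
    then show ?thesis
      by simp
  qed
  with assms(1) show ?thesis
    by (simp add: koszul_cycle_mod_def)
qed

lemma koszul_boundary_mod_cancel_nonzerodivisor:
  assumes nzd: "\<And>y. x * y \<in> ideal.span S \<Longrightarrow> y \<in> ideal.span S"
    and u: "koszul_chain N (Suc p) u" "\<And>T. x * z T - koszul_d a N u T \<in> ideal.span S"
    and "koszul_boundary_mod a N (ideal.span (insert x S)) (Suc p) u"
  shows "koszul_boundary_mod a N (ideal.span S) p z"
proof -
  obtain \<gamma> where \<gamma>: "koszul_chain N (Suc (Suc p)) \<gamma>"
    "\<And>T. u T - koszul_d a N \<gamma> T \<in> ideal.span (insert x S)"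
    using assms(4) unfolding koszul_boundary_mod_def by blast
  obtain w where w: "koszul_chain N (Suc p) w"
    "\<And>T. u T - koszul_d a N \<gamma> T - x * w T \<in> ideal.span S"
    using koszul_chain_decompose_insert[OF koszul_chain_diff[OF u(1) koszul_chain_d[OF \<gamma>(1)]] \<gamma>(2)]
    by blast
  have "koszul_d a N (\<lambda>T. u T - koszul_d a N \<gamma> T - x * w T) T \<in> ideal.span S" for T
    using w(2) by (intro koszul_d_mem_ideal) auto
  then have "koszul_d a N u T - x * koszul_d a N w T \<in> ideal.span S" for T
    by (simp add: koszul_d_diff koszul_d_scale)
  moreover have "x * (z T - koszul_d a N w T)
      = (x * z T - koszul_d a N u T) + (koszul_d a N u T - x * koszul_d a N w T)" for T
    by (simp add: algebra_simps)
  ultimately have "x * (z T - koszul_d a N w T) \<in> ideal.span S" for T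
    by (metis u(2) ideal.span_add)
  with w(1) nzd show ?thesis
    unfolding koszul_boundary_mod_def by blast
qed

lemma koszul_acyclic_mod_regular_seq:
  "regular_seq_mod S xs \<Longrightarrow> set xs \<subseteq> ideal.span (a ` {..<N}) \<Longrightarrow> N < q + length xs
    \<Longrightarrow> koszul_acyclic_mod a N (ideal.span S) q"
proof (induction xs arbitrary: S q)
  case Nil
  then have "koszul_chain N q z \<Longrightarrow> z = (\<lambda>T. 0)" for z :: "nat set \<Rightarrow> 'a"
    by (simp add: koszul_chain_degree_gt)
  then show ?case
    by (auto simp: koszul_acyclic_mod_def koszul_cycle_mod_def
        intro!: koszul_boundary_mod_of_mem ideal.span_zero)
next
  case (Cons x xs)
  show ?case
    unfolding koszul_acyclic_mod_def
  proof (intro allI impI)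
    fix z
    assume z: "koszul_cycle_mod a N (ideal.span S) q z"
    have x: "x \<in> ideal.span (a ` {..<N})"
      using Cons.prems(2) by simp
    obtain u where u: "koszul_chain N (Suc q) u" "\<And>T. x * z T - koszul_d a N u T \<in> ideal.span S"
      using koszul_boundary_mod_ideal_mult[OF ideal.subspace_span z x]
      unfolding koszul_boundary_mod_def by blast
    have "koszul_acyclic_mod a N (ideal.span (insert x S)) (Suc q)"
      using Cons.prems by (intro Cons.IH) auto
    then have "koszul_boundary_mod a N (ideal.span (insert x S)) (Suc q) u"
      using koszul_cycle_mod_insert[OF u] unfolding koszul_acyclic_mod_def by blast
    then show "koszul_boundary_mod a N (ideal.span S) q z"
      using koszul_boundary_mod_cancel_nonzerodivisor[OF _ u] Cons.prems(1) by auto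
  qed
qed

lemma koszul_cycle_mod_shift_by_nonzerodivisor:
  assumes nzd: "\<And>y. x * y \<in> ideal.span S \<Longrightarrow> y \<in> ideal.span S"
    and acyclic: "koszul_acyclic_mod b N (ideal.span S) q"
    and u: "koszul_cycle_mod b N (ideal.span (insert x S)) (Suc q) u"
  obtains t where "koszul_chain N (Suc q) t"
    and "koszul_cycle_mod b N (ideal.span S) (Suc q) (\<lambda>T. u T - x * t T)"
proof -
  obtain v where v: "koszul_chain N q v" "\<And>T. koszul_d b N u T - x * v T \<in> ideal.span S"
    using u koszul_chain_d koszul_chain_decompose_insert
    unfolding koszul_cycle_mod_def by metis
  have "x * koszul_d b N v T \<in> ideal.span S" for T
  proof -
    have "x * koszul_d b N v T = - koszul_d b N (\<lambda>T. koszul_d b N u T - x * v T) T"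
      by (simp add: koszul_d_diff koszul_d_scale)
    also have "\<dots> \<in> ideal.span S"
      using v(2) by (intro ideal.span_neg koszul_d_mem_ideal) auto
    finally show ?thesis .
  qed
  with v(1) nzd have "koszul_cycle_mod b N (ideal.span S) q v"
    by (simp add: koszul_cycle_mod_def)
  with acyclic obtain t where t: "koszul_chain N (Suc q) t"
    "\<And>T. v T - koszul_d b N t T \<in> ideal.span S"
    unfolding koszul_acyclic_mod_def koszul_boundary_mod_def by blast
  have "koszul_d b N (\<lambda>T. u T - x * t T) T
      = (koszul_d b N u T - x * v T) + x * (v T - koszul_d b N t T)" for T
    by (simp add: koszul_d_diff koszul_d_scale algebra_simps)
  then have "koszul_d b N (\<lambda>T. u T - x * t T) T \<in> ideal.span S" for T
    using v(2) t(2) by (simp add: ideal.span_add ideal.span_scale)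
  with t(1) u show ?thesis
    by (intro that[of t]) (auto simp: koszul_cycle_mod_def intro: koszul_chain_diff koszul_chain_scale)
qed

lemma koszul_acyclic_mod_insert:
  assumes nzd: "\<And>y. x * y \<in> ideal.span S \<Longrightarrow> y \<in> ideal.span S"
    and "koszul_acyclic_mod b N (ideal.span S) q"
    and acyclic: "koszul_acyclic_mod b N (ideal.span S) (Suc q)"
  shows "koszul_acyclic_mod b N (ideal.span (insert x S)) (Suc q)"
  unfolding koszul_acyclic_mod_def
proof (intro allI impI)
  fix u
  assume "koszul_cycle_mod b N (ideal.span (insert x S)) (Suc q) u"
  with assms(1,2) obtain t where t: "koszul_chain N (Suc q) t"
    "koszul_cycle_mod b N (ideal.span S) (Suc q) (\<lambda>T. u T - x * t T)"
    by (rule koszul_cycle_mod_shift_by_nonzerodivisor)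
  with acyclic obtain \<beta> where \<beta>: "koszul_chain N (Suc (Suc q)) \<beta>"
    "\<And>T. u T - x * t T - koszul_d b N \<beta> T \<in> ideal.span S"
    unfolding koszul_acyclic_mod_def koszul_boundary_mod_def by blast
  have "u T - koszul_d b N \<beta> T = (u T - x * t T - koszul_d b N \<beta> T) + t T * x" for T
    by (simp add: algebra_simps)
  moreover have "t T * x \<in> ideal.span (insert x S)" for T
    by (intro ideal.span_scale ideal.span_base insertI1)
  ultimately have "u T - koszul_d b N \<beta> T \<in> ideal.span (insert x S)" for T
    using \<beta>(2) ideal.span_mono[OF subset_insertI] by (metis ideal.span_add subsetD)
  with \<beta>(1) show "koszul_boundary_mod b N (ideal.span (insert x S)) (Suc q) u"
    unfolding koszul_boundary_mod_def by blast
qed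

\<comment> \<open>the top Koszul homology of b on A/Q is (Q : (b)) / Q\<close>
lemma colon_trivial_of_koszul_acyclic_top:
  assumes Q: "ideal.subspace Q" and "koszul_acyclic_mod b s Q s" and "\<forall>j<s. b j * w \<in> Q"
  shows "w \<in> Q"
proof -
  define z where "z T = (if T = {..<s} then w else 0)" for T
  have "koszul_chain s s z"
    unfolding koszul_chain_def z_def by auto
  moreover have "koszul_d b s z T \<in> Q" for T
    unfolding koszul_d_eq using assms(3)
    by (intro ideal.subspace_sum[OF Q])
      (auto simp: z_def mult.assoc intro: ideal.subspace_scale[OF Q] ideal.subspace_0[OF Q])
  ultimately have "koszul_boundary_mod b s Q s z"
    using assms(2) by (simp add: koszul_acyclic_mod_def koszul_cycle_mod_def)
  then show ?thesis
    by (auto simp: koszul_boundary_mod_top_iff z_def dest: spec[of _ "{..<s}"])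
qed

lemma koszul_torsion_free_mod_top:
  assumes colon: "\<And>w. (\<forall>u\<in>m. u * w \<in> Q) \<Longrightarrow> w \<in> Q"
  shows "koszul_torsion_free_mod m a N Q N"
  unfolding koszul_torsion_free_mod_def koszul_boundary_mod_top_iff
proof (intro allI impI)
  fix z T
  assume "\<exists>k. \<forall>y\<in>ideal_pow m k. \<forall>T. y * z T \<in> Q"
  then show "z T \<in> Q"
    using colon_ideal_pow_trivial[OF colon] by blast
qed

lemma koszul_boundary_mod_insert_mult:
  assumes acyclic: "koszul_acyclic_mod a N (ideal.span S) (Suc q)"
    and u: "koszul_chain N (Suc q) u" "\<And>T. x * z T - koszul_d a N u T \<in> ideal.span S"
    and "koszul_boundary_mod a N (ideal.span S) q (\<lambda>T. y * z T)"
  shows "koszul_boundary_mod a N (ideal.span (insert x S)) (Suc q) (\<lambda>T. y * u T)"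
proof -
  obtain \<beta> where \<beta>: "koszul_chain N (Suc q) \<beta>" "\<And>T. y * z T - koszul_d a N \<beta> T \<in> ideal.span S"
    using assms(4) unfolding koszul_boundary_mod_def by blast
  have "koszul_d a N (\<lambda>T. y * u T - x * \<beta> T) T
      = x * (y * z T - koszul_d a N \<beta> T) - y * (x * z T - koszul_d a N u T)" for T
    by (simp add: koszul_d_diff koszul_d_scale algebra_simps)
  then have "koszul_d a N (\<lambda>T. y * u T - x * \<beta> T) T \<in> ideal.span S" for T
    using u(2) \<beta>(2) by (simp add: ideal.span_diff ideal.span_scale)
  with u(1) \<beta>(1) have "koszul_cycle_mod a N (ideal.span S) (Suc q) (\<lambda>T. y * u T - x * \<beta> T)"
    by (simp add: koszul_cycle_mod_def koszul_chain_diff koszul_chain_scale)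
  with acyclic obtain \<gamma> where \<gamma>: "koszul_chain N (Suc (Suc q)) \<gamma>"
    "\<And>T. y * u T - x * \<beta> T - koszul_d a N \<gamma> T \<in> ideal.span S"
    unfolding koszul_acyclic_mod_def koszul_boundary_mod_def by blast
  have "y * u T - koszul_d a N \<gamma> T = (y * u T - x * \<beta> T - koszul_d a N \<gamma> T) + \<beta> T * x" for T
    by (simp add: algebra_simps)
  moreover have "\<beta> T * x \<in> ideal.span (insert x S)" for T
    by (intro ideal.span_scale ideal.span_base insertI1)
  ultimately have "y * u T - koszul_d a N \<gamma> T \<in> ideal.span (insert x S)" for T
    using \<gamma>(2) ideal.span_mono[OF subset_insertI] by (metis ideal.span_add subsetD)
  with \<gamma>(1) show ?thesis
    unfolding koszul_boundary_mod_def by blast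
qed

lemma koszul_torsion_free_mod_of_insert:
  assumes nzd: "\<And>y. x * y \<in> ideal.span S \<Longrightarrow> y \<in> ideal.span S"
    and x: "x \<in> ideal.span (a ` {..<N})"
    and acyclic: "koszul_acyclic_mod a N (ideal.span S) (Suc q)"
    and torsion_free: "koszul_torsion_free_mod m a N (ideal.span (insert x S)) (Suc q)"
  shows "koszul_torsion_free_mod m a N (ideal.span S) q"
  unfolding koszul_torsion_free_mod_def
proof (intro allI impI)
  fix z
  assume z: "koszul_cycle_mod a N (ideal.span S) q z"
    and "\<exists>k. \<forall>y\<in>ideal_pow m k. koszul_boundary_mod a N (ideal.span S) q (\<lambda>T. y * z T)"
  then obtain k where k: "\<forall>y\<in>ideal_pow m k. koszul_boundary_mod a N (ideal.span S) q (\<lambda>T. y * z T)"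
    by blast
  obtain u where u: "koszul_chain N (Suc q) u" "\<And>T. x * z T - koszul_d a N u T \<in> ideal.span S"
    using koszul_boundary_mod_ideal_mult[OF ideal.subspace_span z x]
    unfolding koszul_boundary_mod_def by blast
  \<comment> \<open>u represents the image of the class of z under the connecting map of 0 \<rightarrow> A/Q \<rightarrow> A/Q \<rightarrow> A/(Q, x) \<rightarrow> 0\<close>
  have "koszul_boundary_mod a N (ideal.span (insert x S)) (Suc q) u"
    using torsion_free koszul_cycle_mod_insert[OF u] koszul_boundary_mod_insert_mult[OF acyclic u] k
    unfolding koszul_torsion_free_mod_def by blast
  then show "koszul_boundary_mod a N (ideal.span S) q z"
    using koszul_boundary_mod_cancel_nonzerodivisor[OF nzd u] by blast
qed

lemma koszul_torsion_free_mod_regular_seq: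
  assumes "regular_seq_mod S xs" and "set xs \<subseteq> ideal.span (a ` {..<n})" and "length xs \<le> n"
    and "r + length xs \<le> s" and "\<forall>q\<ge>r. koszul_acyclic_mod b s (ideal.span S) q"
    and "\<forall>j<s. b j \<in> m"
  shows "koszul_torsion_free_mod m a n (ideal.span S) (n - length xs)"
  using assms
proof (induction xs arbitrary: S r)
  case Nil
  have "w \<in> ideal.span S" if "\<forall>u\<in>m. u * w \<in> ideal.span S" for w
    using Nil.prems(4-6) that by (intro colon_trivial_of_koszul_acyclic_top[of _ b s]) auto
  then show ?case
    by (simp add: koszul_torsion_free_mod_top)
next
  case (Cons x xs)
  have nzd: "\<And>y. x * y \<in> ideal.span S \<Longrightarrow> y \<in> ideal.span S"
    using Cons.prems(1) by simp
  define q where "q = n - length (x # xs)"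
  have q: "n - length xs = Suc q"
    using Cons.prems(3) unfolding q_def by simp
  have "\<forall>q\<ge>Suc r. koszul_acyclic_mod b s (ideal.span (insert x S)) q"
    using Cons.prems(5) koszul_acyclic_mod_insert[OF nzd] by (metis Suc_le_D Suc_le_mono le_SucI)
  then have "koszul_torsion_free_mod m a n (ideal.span (insert x S)) (Suc q)"
    using Cons.IH[of "insert x S" "Suc r"] Cons.prems q by simp
  moreover have "koszul_acyclic_mod a n (ideal.span S) (Suc q)"
    using koszul_acyclic_mod_regular_seq[OF Cons.prems(1,2)] q by simp
  ultimately show ?case
    using koszul_torsion_free_mod_of_insert[OF nzd] Cons.prems(2) by (simp add: q_def)
qed

lemma grade_eq_enatE:
  assumes "grade J = enat g"
  obtains xs where "length xs = g" "set xs \<subseteq> J" "weak_regular_seq xs"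
proof -
  define X where "X = {enat (length xs) |xs. set xs \<subseteq> J \<and> weak_regular_seq xs}"
  have "enat 0 \<in> X"
    unfolding X_def by (intro CollectI exI[of _ "[]"]) (simp add: weak_regular_seq_def)
  then have "X \<noteq> {}"
    by blast
  moreover have "Sup X = enat g"
    using assms by (simp add: grade_def X_def)
  ultimately have "finite X" and "enat g = Max X"
    unfolding Sup_enat_def by (auto split: if_splits)
  with \<open>X \<noteq> {}\<close> have "enat g \<in> X"
    by simp
  with that show thesis
    unfolding X_def by auto
qed

lemma less_gradeE:
  assumes "enat g < grade J"
  obtains ys where "g < length ys" "set ys \<subseteq> J" "weak_regular_seq ys"
  using assms that unfolding grade_def less_Sup_iff by auto

theorem mainTheorem8:
  fixes G :: "nat \<Rightarrow> 'a::comm_ring_1 set" and a :: "nat \<Rightarrow> 'a" and n :: nat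
  assumes "noetherian_ring TYPE('a)"
    and "graded_ring G"
    and "grade (irrelevant_ideal G) > grade (ideal_gen (a ` {..<n}))"
  shows "koszul_H0_vanishes (irrelevant_ideal G) a n (n - the_enat (grade (ideal_gen (a ` {..<n}))))"
proof -
  let ?I = "ideal_gen (a ` {..<n})" and ?m = "irrelevant_ideal G"
  obtain g where g: "grade ?I = enat g"
    using assms(3) by (cases "grade ?I") auto
  then obtain xs where xs: "length xs = g" "set xs \<subseteq> ?I" "weak_regular_seq xs"
    by (rule grade_eq_enatE)
  obtain ys where ys: "g < length ys" "set ys \<subseteq> ?m" "weak_regular_seq ys"
    using assms(3) g by (auto elim: less_gradeE)
  have "set ys \<subseteq> ideal.span (nth ys ` {..<length ys})"
    by (auto simp: set_conv_nth intro: ideal.span_base)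
  then have "\<forall>q\<ge>1. koszul_acyclic_mod (nth ys) (length ys) (ideal.span {}) q"
    using ys(3) koszul_acyclic_mod_regular_seq by (fastforce simp: weak_regular_seq_iff)
  then have "koszul_torsion_free_mod ?m a n (ideal.span {}) (n - length (take n xs))"
    using xs ys(1,2) set_take_subset[of n xs]
    by (intro koszul_torsion_free_mod_regular_seq[where r = 1])
      (auto simp: weak_regular_seq_iff ideal_gen_eq_span regular_seq_mod_take)
  moreover have "n - length (take n xs) = n - the_enat (grade ?I)"
    using xs(1) g by auto
  ultimately show ?thesis
    by (simp add: koszul_H0_vanishes_iff_torsion_free)
qed

end
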